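(* Let $\omega=e^{2\pi i/3}$ and let $S$ be a $6\times 6$ complex Hadamard matrix all of whose entries lie in $\{1,\omega,\omega^2\}$. Then $S$ is complex equivalent to the Tao matrix $$S_6^{(0)}=\begin{bmatrix} 1&1&1&1&1&1\\ 1&1&\omega&\omega&\omega^2&\omega^2\\ 1&\omega&1&\omega^2&\omega^2&\omega\\ 1&\omega&\omega^2&1&\omega&\omega^2\\ 1&\omega^2&\omega^2&\omega&1&\omega\\ 1&\omega^2&\omega&\omega^2&\omega&1 \end{bmatrix}.$$
   Context: A complex Hadamard matrix (CHM) of order $n$ is an $n\times n$ complex matrix $H$ all of whose entries have modulus one and which satisfies $HH^\dagger=nI$. A monomial unitary matrix is a unitary matrix each of whose rows and columns has exactly one nonzero entry, that entry having modulus one. Two $n\times n$ matrices $U,V$ are complex equivalent if $U=PVQ$ for some $n\times n$ monomial unitary matrices $P,Q$. *)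

theory Defs
  imports Complex_Main
begin

text \<open>n x n complex matrices are represented as functions nat => nat => complex;
  only the entries with indices i < n, j < n are meaningful.\<close>

definition mat_mult :: "nat \<Rightarrow> (nat \<Rightarrow> nat \<Rightarrow> complex) \<Rightarrow> (nat \<Rightarrow> nat \<Rightarrow> complex) \<Rightarrow> (nat \<Rightarrow> nat \<Rightarrow> complex)" where
  "mat_mult n A B = (\<lambda>i j. \<Sum>k<n. A i k * B k j)"

definition adjoint :: "(nat \<Rightarrow> nat \<Rightarrow> complex) \<Rightarrow> (nat \<Rightarrow> nat \<Rightarrow> complex)" where
  "adjoint A = (\<lambda>i j. cnj (A j i))"

definition mat_eq :: "nat \<Rightarrow> (nat \<Rightarrow> nat \<Rightarrow> complex) \<Rightarrow> (nat \<Rightarrow> nat \<Rightarrow> complex) \<Rightarrow> bool" where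
  "mat_eq n A B = (\<forall>i<n. \<forall>j<n. A i j = B i j)"

definition id_mat :: "(nat \<Rightarrow> nat \<Rightarrow> complex)" where
  "id_mat = (\<lambda>i j. if i = j then 1 else 0)"

definition is_CHM :: "nat \<Rightarrow> (nat \<Rightarrow> nat \<Rightarrow> complex) \<Rightarrow> bool" where
  "is_CHM n H = ((\<forall>i<n. \<forall>j<n. cmod (H i j) = 1) \<and>
      mat_eq n (mat_mult n H (adjoint H)) (\<lambda>i j. of_nat n * id_mat i j))"

definition unitary :: "nat \<Rightarrow> (nat \<Rightarrow> nat \<Rightarrow> complex) \<Rightarrow> bool" where
  "unitary n U = mat_eq n (mat_mult n U (adjoint U)) id_mat"

definition monomial_unitary :: "nat \<Rightarrow> (nat \<Rightarrow> nat \<Rightarrow> complex) \<Rightarrow> bool" where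
  "monomial_unitary n P = (unitary n P \<and>
      (\<forall>i<n. \<exists>!j. j < n \<and> P i j \<noteq> 0) \<and>
      (\<forall>j<n. \<exists>!i. i < n \<and> P i j \<noteq> 0) \<and>
      (\<forall>i<n. \<forall>j<n. P i j \<noteq> 0 \<longrightarrow> cmod (P i j) = 1))"

definition complex_equivalent :: "nat \<Rightarrow> (nat \<Rightarrow> nat \<Rightarrow> complex) \<Rightarrow> (nat \<Rightarrow> nat \<Rightarrow> complex) \<Rightarrow> bool" where
  "complex_equivalent n U V = (\<exists>P Q. monomial_unitary n P \<and> monomial_unitary n Q \<and>
      mat_eq n U (mat_mult n (mat_mult n P V) Q))"

definition omega3 :: complex where
  "omega3 = exp (2 * of_real pi * \<i> / 3)"

definition tao_exps :: "nat list list" where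
  "tao_exps = [[0,0,0,0,0,0],
               [0,0,1,1,2,2],
               [0,1,0,2,2,1],
               [0,1,2,0,1,2],
               [0,2,2,1,0,1],
               [0,2,1,2,1,0]]"

definition tao6 :: "nat \<Rightarrow> nat \<Rightarrow> complex" where
  "tao6 i j = omega3 ^ (tao_exps ! i ! j)"

end

theory Submission
  imports Defs "HOL-Combinatorics.Multiset_Permutations"
begin

text \<open>Write every entry of \<open>S\<close> as a power of \<open>\<omega>\<close>. Multiplying rows and columns by powers of
  \<open>\<omega>\<close> makes the first row and column constant without leaving the equivalence class. Two rows
  with exponent vectors \<open>a\<close>, \<open>b\<close> are orthogonal iff \<open>\<Sum>\<^sub>k \<omega>^(a\<^sub>k - b\<^sub>k) = 0\<close>, and a sum of six cube
  roots of unity vanishes only if each of \<open>1, \<omega>, \<omega>\<^sup>2\<close> occurs equally often. Permuting the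
  columns then turns the second row into the second row of the Tao matrix, after which only
  finitely many candidates remain for the last four rows; evaluating all orthogonal choices shows
  that each one is the Tao matrix with its rows and columns permuted.\<close>

lemma omega3_eq: "omega3 = Complex (-1/2) (sqrt 3 / 2)"
proof -
  have "omega3 = cis (2 * pi / 3)"
    unfolding omega3_def cis_conv_exp by (simp add: field_simps)
  then show ?thesis
    by (simp add: cis.ctr cos_120 sin_120)
qed

lemma omega3_squared_eq: "omega3 ^ 2 = Complex (-1/2) (- sqrt 3 / 2)"
proof -
  have "Complex (- (1/2)) (sqrt 3 / 2) ^ 2 = Complex (- (1/2)) (- (sqrt 3 / 2))"
    by (simp add: complex_eq_iff Re_power2 Im_power2 power2_eq_square)
  then show ?thesis
    by (simp add: omega3_eq)
qed

lemma omega3_cube: "omega3 ^ 3 = 1"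
proof -
  have "omega3 ^ 3 = omega3 ^ 2 * omega3"
    by (simp add: power3_eq_cube power2_eq_square)
  also have "\<dots> = 1"
    unfolding omega3_squared_eq by (simp add: omega3_eq complex_eq_iff field_simps)
  finally show ?thesis .
qed

lemma norm_omega3_power [simp]: "cmod (omega3 ^ k) = 1"
proof -
  have "cmod omega3 = 1"
    by (simp add: omega3_eq cmod_def power2_eq_square)
  then show ?thesis
    by (simp add: norm_power)
qed

lemma omega3_power_mod [simp]: "omega3 ^ (a mod 3) = omega3 ^ a"
proof -
  have "omega3 ^ a = omega3 ^ (3 * (a div 3) + a mod 3)"
    by simp
  also have "\<dots> = (omega3 ^ 3) ^ (a div 3) * omega3 ^ (a mod 3)"
    by (simp only: power_add power_mult)
  finally show ?thesis
    by (simp add: omega3_cube)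
qed

lemma cnj_omega3_power: "cnj (omega3 ^ a) = omega3 ^ (2 * a)"
proof -
  have "cnj omega3 = omega3 ^ 2"
    unfolding omega3_squared_eq by (simp add: omega3_eq complex_eq_iff)
  then show ?thesis
    by (simp add: power_mult)
qed

lemma omega3_powers_distinct: "omega3 \<noteq> 1" "omega3 ^ 2 \<noteq> 1" "omega3 \<noteq> omega3 ^ 2"
  unfolding omega3_squared_eq by (simp_all add: omega3_eq complex_eq_iff)

definition balanced :: "nat list \<Rightarrow> bool" where
  "balanced xs \<longleftrightarrow> count_list xs 0 = count_list xs 1 \<and> count_list xs 1 = count_list xs 2"

lemma sum_list_omega3_powers:
  assumes "set xs \<subseteq> {0, 1, 2}"
  shows "(\<Sum>x\<leftarrow>xs. omega3 ^ x) =
    of_nat (count_list xs 0) + of_nat (count_list xs 1) * omega3 + of_nat (count_list xs 2) * omega3 ^ 2"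
  using assms by (induction xs) (auto simp: algebra_simps)

lemma balanced_if_sum_list_omega3_powers_eq_0:
  assumes "set xs \<subseteq> {0, 1, 2}" and "(\<Sum>x\<leftarrow>xs. omega3 ^ x) = 0"
  shows "balanced xs"
proof -
  let ?a = "real (count_list xs 0)" and ?b = "real (count_list xs 1)" and ?c = "real (count_list xs 2)"
  from assms have "Re (\<Sum>x\<leftarrow>xs. omega3 ^ x) = 0" "Im (\<Sum>x\<leftarrow>xs. omega3 ^ x) = 0"
    by simp_all
  then have "?a - ?b / 2 - ?c / 2 = 0" "?b * sqrt 3 / 2 - ?c * sqrt 3 / 2 = 0"
    unfolding sum_list_omega3_powers[OF assms(1)] omega3_squared_eq by (simp_all add: omega3_eq)
  then have "?b = ?c" "2 * ?a = ?b + ?c"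
    by (simp_all add: field_simps)
  then show ?thesis
    unfolding balanced_def by linarith
qed

definition phase_perm_mat :: "(nat \<Rightarrow> nat) \<Rightarrow> (nat \<Rightarrow> complex) \<Rightarrow> nat \<Rightarrow> nat \<Rightarrow> complex" where
  "phase_perm_mat \<sigma> c = (\<lambda>i k. if k = \<sigma> i then c i else 0)"

lemma mat_mult_phase_perm_mat_left:
  assumes "\<sigma> permutes {..<n}" and "i < n"
  shows "mat_mult n (phase_perm_mat \<sigma> c) A i j = c i * A (\<sigma> i) j"
proof -
  have "mat_mult n (phase_perm_mat \<sigma> c) A i j = (\<Sum>k<n. if k = \<sigma> i then c i * A k j else 0)"
    unfolding mat_mult_def phase_perm_mat_def by (intro sum.cong) auto
  moreover have "\<sigma> i < n"
    using permutes_in_image[OF assms(1), of i] assms(2) by simp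
  ultimately show ?thesis
    by simp
qed

lemma mat_mult_phase_perm_mat_right:
  assumes \<tau>: "\<tau> permutes {..<n}" and "j < n"
  shows "mat_mult n A (phase_perm_mat (inv \<tau>) (d \<circ> inv \<tau>)) i j = A i (\<tau> j) * d j"
proof -
  have "mat_mult n A (phase_perm_mat (inv \<tau>) (d \<circ> inv \<tau>)) i j
      = (\<Sum>k<n. if k = \<tau> j then A i k * d j else 0)"
    unfolding mat_mult_def phase_perm_mat_def
  proof (intro sum.cong refl)
    fix k
    have "j = inv \<tau> k \<longleftrightarrow> k = \<tau> j"
      using permutes_inverses[OF \<tau>] by metis
    then show "A i k * (if j = inv \<tau> k then (d \<circ> inv \<tau>) k else 0)
        = (if k = \<tau> j then A i k * d j else 0)"
      by (cases "k = \<tau> j") (simp_all add: permutes_inverses(2)[OF \<tau>])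
  qed
  moreover have "\<tau> j < n"
    using permutes_in_image[OF \<tau>, of j] assms(2) by simp
  ultimately show ?thesis
    by simp
qed

lemma monomial_unitary_phase_perm_mat:
  assumes \<sigma>: "\<sigma> permutes {..<n}" and c: "\<forall>i<n. cmod (c i) = 1"
  shows "monomial_unitary n (phase_perm_mat \<sigma> c)"
  unfolding monomial_unitary_def
proof (intro conjI allI impI)
  show "unitary n (phase_perm_mat \<sigma> c)"
    unfolding unitary_def mat_eq_def
  proof (intro allI impI)
    fix i i' assume "i < n" "i' < n"
    have \<sigma>_eq_iff: "\<sigma> i = \<sigma> i' \<longleftrightarrow> i = i'" for i i'
      using permutes_inj[OF \<sigma>] by (auto simp: inj_def)
    have c_cnj: "c i * cnj (c i) = 1"
      using complex_norm_square[of "c i"] c \<open>i < n\<close> by simp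
    have "mat_mult n (phase_perm_mat \<sigma> c) (adjoint (phase_perm_mat \<sigma> c)) i i'
        = c i * cnj (phase_perm_mat \<sigma> c i' (\<sigma> i))"
      using \<open>i < n\<close> by (simp add: mat_mult_phase_perm_mat_left[OF \<sigma>] adjoint_def)
    then show "mat_mult n (phase_perm_mat \<sigma> c) (adjoint (phase_perm_mat \<sigma> c)) i i' = id_mat i i'"
      using c_cnj by (auto simp: phase_perm_mat_def id_mat_def \<sigma>_eq_iff)
  qed
next
  fix i assume i: "i < n"
  show "\<exists>!k. k < n \<and> phase_perm_mat \<sigma> c i k \<noteq> 0"
  proof (rule ex1I[of _ "\<sigma> i"])
    have "\<sigma> i < n"
      using permutes_in_image[OF \<sigma>, of i] i by simp
    then show "\<sigma> i < n \<and> phase_perm_mat \<sigma> c i (\<sigma> i) \<noteq> 0"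
      using i c by (auto simp: phase_perm_mat_def)
  qed (simp add: phase_perm_mat_def split: if_splits)
next
  fix k assume k: "k < n"
  show "\<exists>!i. i < n \<and> phase_perm_mat \<sigma> c i k \<noteq> 0"
  proof (rule ex1I[of _ "inv \<sigma> k"])
    have "inv \<sigma> k < n" "\<sigma> (inv \<sigma> k) = k"
      using permutes_in_image[OF permutes_inv[OF \<sigma>], of k] k permutes_inverses(1)[OF \<sigma>] by simp_all
    then show "inv \<sigma> k < n \<and> phase_perm_mat \<sigma> c (inv \<sigma> k) k \<noteq> 0"
      using c by (auto simp: phase_perm_mat_def)
  next
    fix i assume "i < n \<and> phase_perm_mat \<sigma> c i k \<noteq> 0"
    then have "k = \<sigma> i"
      by (simp add: phase_perm_mat_def split: if_splits)
    then show "i = inv \<sigma> k"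
      by (simp add: permutes_inverses(2)[OF \<sigma>])
  qed
next
  fix i k assume "i < n" "k < n" "phase_perm_mat \<sigma> c i k \<noteq> 0"
  then show "cmod (phase_perm_mat \<sigma> c i k) = 1"
    using c by (auto simp: phase_perm_mat_def split: if_splits)
qed

lemma complex_equivalent_if_phased_permutation:
  assumes \<sigma>: "\<sigma> permutes {..<n}" and \<tau>: "\<tau> permutes {..<n}"
    and c: "\<forall>i<n. cmod (c i) = 1" and d: "\<forall>j<n. cmod (d j) = 1"
    and S: "\<forall>i<n. \<forall>j<n. S i j = c i * V (\<sigma> i) (\<tau> j) * d j"
  shows "complex_equivalent n S V"
  unfolding complex_equivalent_def
proof (intro exI conjI)
  let ?P = "phase_perm_mat \<sigma> c" and ?Q = "phase_perm_mat (inv \<tau>) (d \<circ> inv \<tau>)"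
  show "monomial_unitary n ?P"
    using monomial_unitary_phase_perm_mat[OF \<sigma> c] .
  have "\<forall>k<n. cmod ((d \<circ> inv \<tau>) k) = 1"
    using d permutes_in_image[OF permutes_inv[OF \<tau>]] by simp
  then show "monomial_unitary n ?Q"
    using monomial_unitary_phase_perm_mat[OF permutes_inv[OF \<tau>]] by blast
  show "mat_eq n S (mat_mult n (mat_mult n ?P V) ?Q)"
    using S by (simp add: mat_eq_def mat_mult_phase_perm_mat_right[OF \<tau>]
        mat_mult_phase_perm_mat_left[OF \<sigma>])
qed

lemma is_CHM_rows_orthogonal:
  assumes "is_CHM n H" and "i < n" and "i' < n" and "i \<noteq> i'"
  shows "(\<Sum>k<n. H i k * cnj (H i' k)) = 0"
  using assms unfolding is_CHM_def mat_eq_def mat_mult_def adjoint_def id_mat_def by auto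

lemma omega3_matrix_dephased:
  assumes "\<forall>i<n. \<forall>j<n. S i j \<in> {1, omega3, omega3 ^ 2}"
  obtains f c d where "\<forall>i<n. \<forall>j<n. S i j = c i * omega3 ^ f i j * d j"
    and "\<forall>i. cmod (c i) = 1" and "\<forall>j. cmod (d j) = 1"
    and "\<forall>i j. f i j < 3" and "\<forall>j. f 0 j = 0" and "\<forall>i. f i 0 = 0"
proof -
  define e where "e i j = (if S i j = 1 then 0 else if S i j = omega3 then 1 else 2 :: nat)" for i j
  have S_eq: "S i j = omega3 ^ e i j" if "i < n" "j < n" for i j
    using assms that omega3_powers_distinct by (auto simp: e_def)
  \<comment> \<open>\<open>f i j \<equiv> e i j - e i 0 - e 0 j + e 0 0 (mod 3)\<close>, written without subtraction\<close>
  define f where "f i j = (e i j + 2 * e i 0 + 2 * e 0 j + e 0 0) mod 3" for i j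
  define c where "c i = omega3 ^ (e i 0 + 2 * e 0 0)" for i
  define d where "d j = omega3 ^ e 0 j" for j
  have "\<forall>i<n. \<forall>j<n. S i j = c i * omega3 ^ f i j * d j"
  proof (intro allI impI)
    fix i j assume "i < n" "j < n"
    have "c i * omega3 ^ f i j * d j
        = omega3 ^ (e i 0 + 2 * e 0 0 + (e i j + 2 * e i 0 + 2 * e 0 j + e 0 0) + e 0 j)"
      by (simp only: c_def d_def f_def omega3_power_mod power_add)
    also have "\<dots> = omega3 ^ (e i j + 3 * (e i 0 + e 0 0 + e 0 j))"
      by (rule arg_cong[where f = "(^) omega3"]) simp
    also have "\<dots> = S i j"
      using S_eq[OF \<open>i < n\<close> \<open>j < n\<close>] by (simp add: power_add power_mult omega3_cube)
    finally show "S i j = c i * omega3 ^ f i j * d j" ..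
  qed
  moreover have "\<forall>j. f 0 j = 0"
  proof
    fix j
    have "e 0 j + 2 * e 0 0 + 2 * e 0 j + e 0 0 = (e 0 j + e 0 0) * 3"
      by simp
    then show "f 0 j = 0"
      unfolding f_def by simp
  qed
  moreover have "\<forall>i. f i 0 = 0"
  proof
    fix i
    have "e i 0 + 2 * e i 0 + 2 * e 0 0 + e 0 0 = (e i 0 + e 0 0) * 3"
      by simp
    then show "f i 0 = 0"
      unfolding f_def by simp
  qed
  moreover have "\<forall>i j. f i j < 3" "\<forall>i. cmod (c i) = 1" "\<forall>j. cmod (d j) = 1"
    by (simp_all add: f_def c_def d_def)
  ultimately show thesis
    using that by blast
qed

text \<open>\<open>(x + 2 * y) mod 3\<close> is the exponent of \<open>\<omega>^x * cnj (\<omega>^y)\<close>.\<close>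

definition orthogonal_exps :: "nat list \<Rightarrow> nat list \<Rightarrow> bool" where
  "orthogonal_exps xs ys \<longleftrightarrow> balanced (map2 (\<lambda>x y. (x + 2 * y) mod 3) xs ys)"

lemma orthogonal_exps_rows_if_is_CHM:
  assumes "is_CHM n S" and S: "\<forall>i<n. \<forall>j<n. S i j = c i * omega3 ^ f i j * d j"
    and c: "\<forall>i. cmod (c i) = 1" and d: "\<forall>j. cmod (d j) = 1"
    and i: "i < n" and i': "i' < n" and "i \<noteq> i'"
  shows "orthogonal_exps (map (f i) [0..<n]) (map (f i') [0..<n])"
proof -
  let ?g = "\<lambda>k. (f i k + 2 * f i' k) mod 3"
  have "S i k * cnj (S i' k) = c i * cnj (c i') * omega3 ^ ?g k" if "k < n" for k
  proof -
    have "d k * cnj (d k) = 1"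
      using complex_norm_square[of "d k"] d by simp
    moreover have "omega3 ^ ?g k = omega3 ^ f i k * cnj (omega3 ^ f i' k)"
      by (simp only: omega3_power_mod power_add cnj_omega3_power)
    ultimately show ?thesis
      using S i i' that by (simp add: algebra_simps)
  qed
  then have "c i * cnj (c i') * (\<Sum>k<n. omega3 ^ ?g k) = 0"
    using is_CHM_rows_orthogonal[OF assms(1) i i' \<open>i \<noteq> i'\<close>] by (simp add: sum_distrib_left)
  moreover have "c i * cnj (c i') \<noteq> 0"
    using c by (metis complex_cnj_zero_iff mult_eq_0_iff norm_zero zero_neq_one)
  ultimately have "(\<Sum>x\<leftarrow>map ?g [0..<n]. omega3 ^ x) = 0"
    by (simp add: sum_set_upt_conv_sum_list_nat[symmetric] atLeast0LessThan o_def)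
  then have "balanced (map ?g [0..<n])"
    by (intro balanced_if_sum_list_omega3_powers_eq_0) auto
  then show ?thesis
    by (simp add: orthogonal_exps_def map2_map_map)
qed

lemma balanced_iff_mset_eq:
  assumes "mset xs = mset ys"
  shows "balanced xs \<longleftrightarrow> balanced ys"
  using assms by (simp add: balanced_def flip: count_mset)

lemma orthogonal_exps_map_mset_eq:
  assumes "mset xs = mset ys"
  shows "orthogonal_exps (map f xs) (map g xs) \<longleftrightarrow> orthogonal_exps (map f ys) (map g ys)"
  unfolding orthogonal_exps_def map2_map_map
  by (rule balanced_iff_mset_eq) (simp add: assms)

lemma length_eq_3_count_list_if_balanced:
  assumes "balanced xs" and "set xs \<subseteq> {0, 1, 2}" and "k \<in> {0, 1, 2}"
  shows "length xs = 3 * count_list xs k"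
proof -
  have "length xs = count_list xs 0 + count_list xs 1 + count_list xs 2"
    using assms(2) by (induction xs) auto
  then show ?thesis
    using assms(1,3) by (auto simp: balanced_def)
qed

definition sorting_perm :: "nat list \<Rightarrow> nat list" where
  "sorting_perm v = concat (map (\<lambda>k. filter (\<lambda>j. v ! j = k) [0..<length v]) [0, 1, 2])"

lemma sorting_perm_in_permutations_of_set:
  assumes "set v \<subseteq> {0, 1, 2}"
  shows "sorting_perm v \<in> permutations_of_set {..<length v}"
proof
  show "set (sorting_perm v) = {..<length v}"
  proof
    show "set (sorting_perm v) \<subseteq> {..<length v}"
      by (auto simp: sorting_perm_def)
    show "{..<length v} \<subseteq> set (sorting_perm v)"
    proof
      fix j assume "j \<in> {..<length v}"
      then have "j < length v"
        by simp
      moreover have "v ! j \<in> {0, 1, 2}"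
        using assms nth_mem[OF \<open>j < length v\<close>] by blast
      ultimately show "j \<in> set (sorting_perm v)"
        by (auto simp: sorting_perm_def)
    qed
  qed
  show "distinct (sorting_perm v)"
    by (auto simp: sorting_perm_def)
qed

lemma map_nth_sorting_perm:
  "map ((!) v) (sorting_perm v) =
    replicate (count_list v 0) 0 @ replicate (count_list v 1) 1 @ replicate (count_list v 2) 2"
proof -
  have "map ((!) v) (filter (\<lambda>j. v ! j = k) [0..<length v]) = filter ((=) k) (map ((!) v) [0..<length v])"
    for k by (simp add: filter_map comp_def eq_commute[of k])
  then have "map ((!) v) (filter (\<lambda>j. v ! j = k) [0..<length v]) = replicate (count_list v k) k" for k
    by (simp add: map_nth replicate_count_mset_eq_filter_eq[of v k, symmetric] count_mset)
  then show ?thesis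
    by (simp add: sorting_perm_def)
qed

lemma sorting_perm_nth_0:
  assumes "v \<noteq> []" and "v ! 0 = 0"
  shows "sorting_perm v ! 0 = 0"
  using assms by (simp add: sorting_perm_def upt_conv_Cons)

lemma permutes_nth_if_permutations_of_set:
  assumes "p \<in> permutations_of_set {..<n}"
  shows "(\<lambda>j. if j < n then p ! j else j) permutes {..<n}"
proof (rule bij_imp_permutes)
  have set_p: "set p = {..<n}" and "distinct p"
    using assms by (auto dest: permutations_of_setD)
  then have len: "length p = n"
    using distinct_card by fastforce
  have "inj_on ((!) p) {..<n}"
    using \<open>distinct p\<close> len by (auto simp: inj_on_def nth_eq_iff_index_eq)
  moreover have "(!) p ` {..<n} = {..<n}"
    using set_p len by (auto simp: set_conv_nth)
  ultimately show "bij_betw (\<lambda>j. if j < n then p ! j else j) {..<n} {..<n}"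
    by (simp add: bij_betw_def inj_on_def)
qed auto

fun orthogonal_sequences :: "nat \<Rightarrow> nat list list \<Rightarrow> nat list list list" where
  "orthogonal_sequences 0 cs = [[]]"
| "orthogonal_sequences (Suc k) cs =
     concat (map (\<lambda>v. map (Cons v) (orthogonal_sequences k (filter (\<lambda>w. orthogonal_exps w v) cs))) cs)"

lemma in_orthogonal_sequences:
  assumes "set vs \<subseteq> set cs" and "sorted_wrt (\<lambda>v w. orthogonal_exps w v) vs"
  shows "vs \<in> set (orthogonal_sequences (length vs) cs)"
  using assms
proof (induction vs arbitrary: cs)
  case (Cons v vs)
  then have "vs \<in> set (orthogonal_sequences (length vs) (filter (\<lambda>w. orthogonal_exps w v) cs))"
    by (intro Cons.IH) auto
  with Cons.prems show ?case
    by auto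
qed simp

definition tao_completion_rows :: "nat list list" where
  "tao_completion_rows = filter (\<lambda>v. hd v = 0 \<and> orthogonal_exps v (tao_exps ! 0) \<and> orthogonal_exps v (tao_exps ! 1))
     (List.n_lists 6 [0, 1, 2])"

definition permuted_tao :: "nat list \<Rightarrow> nat list \<Rightarrow> nat list list" where
  "permuted_tao rs cs = map (\<lambda>i. map (\<lambda>j. tao_exps ! i ! j) cs) rs"

text \<open>Row and column orders of the Tao matrix that fix its first two rows; the evaluation below
  shows that these already account for every dephased orthogonal completion.\<close>

definition tao_permutations :: "(nat list \<times> nat list) list" where
  "tao_permutations = [(0 # 1 # q, c). q \<leftarrow> permutations_of_list_impl [2, 3, 4, 5],
      c \<leftarrow> [[0, 1, 2, 3, 4, 5], [0, 1, 2, 3, 5, 4]]]"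

lemma tao_permutations_in_permutations_of_set:
  assumes "(rs, cs) \<in> set tao_permutations"
  shows "rs \<in> permutations_of_set {..<6}" and "cs \<in> permutations_of_set {..<6}"
proof -
  obtain q where rs: "rs = 0 # 1 # q" and q: "mset q = mset [2, 3, 4, 5 :: nat]"
    and cs: "cs \<in> {[0, 1, 2, 3, 4, 5], [0, 1, 2, 3, 5, 4]}"
    using assms by (auto simp: tao_permutations_def set_permutations_of_list_impl
        permutations_of_multiset_def)
  have "set q = {2, 3, 4, 5}" "distinct q"
    using q mset_eq_setD[OF q] mset_eq_imp_distinct_iff[OF q] by auto
  moreover have six: "{..<6 :: nat} = {0, 1, 2, 3, 4, 5}"
    by auto
  ultimately show "rs \<in> permutations_of_set {..<6}"
    by (auto simp: rs permutations_of_set_def)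
  show "cs \<in> permutations_of_set {..<6}"
    using cs by (auto simp: six permutations_of_set_def)
qed

lemma dephased_tao_completions_are_permuted_tao:
  "list_all (\<lambda>vs. tao_exps ! 0 # tao_exps ! 1 # vs \<in> set (map (case_prod permuted_tao) tao_permutations))
     (orthogonal_sequences 4 tao_completion_rows)"
  by code_simp

lemma sorting_perm_to_tao_row:
  assumes "set v \<subseteq> {0, 1, 2}" and "length v = 6" and "balanced v" and "v ! 0 = 0"
  shows "sorting_perm v \<in> permutations_of_set {..<6}" and "sorting_perm v ! 0 = 0"
    and "map ((!) v) (sorting_perm v) = tao_exps ! 1"
proof -
  show "sorting_perm v \<in> permutations_of_set {..<6}"
    using sorting_perm_in_permutations_of_set[OF assms(1)] assms(2) by simp
  have "v \<noteq> []"
    using assms(2) by auto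
  then show "sorting_perm v ! 0 = 0"
    using sorting_perm_nth_0 assms(4) by blast
  have "count_list v k = 2" if "k \<in> {0, 1, 2}" for k
    using length_eq_3_count_list_if_balanced[OF assms(3,1) that] assms(2) by simp
  then have "map ((!) v) (sorting_perm v) = replicate 2 0 @ replicate 2 1 @ replicate 2 2"
    by (simp add: map_nth_sorting_perm)
  then show "map ((!) v) (sorting_perm v) = tao_exps ! 1"
    by (simp add: tao_exps_def numeral_2_eq_2)
qed

lemma permutes_if_permuted_matrix_eq:
  assumes "p \<in> permutations_of_set {..<n}" and "rs \<in> permutations_of_set {..<n}"
    and "cs \<in> permutations_of_set {..<n}"
    and eq: "\<forall>i<n. \<forall>j<n. A i (p ! j) = B (rs ! i) (cs ! j)"
  obtains \<sigma> \<tau> where "\<sigma> permutes {..<n}" and "\<tau> permutes {..<n}"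
    and "\<forall>i<n. \<forall>j<n. A i j = B (\<sigma> i) (\<tau> j)"
proof
  let ?\<pi> = "\<lambda>xs j. if j < n then xs ! j else j"
  have \<pi>: "?\<pi> p permutes {..<n}" "?\<pi> rs permutes {..<n}" "?\<pi> cs permutes {..<n}"
    using assms(1-3) by (simp_all add: permutes_nth_if_permutations_of_set)
  show "?\<pi> rs permutes {..<n}" "?\<pi> cs \<circ> inv (?\<pi> p) permutes {..<n}"
    using \<pi> by (simp_all add: permutes_compose permutes_inv)
  show "\<forall>i<n. \<forall>j<n. A i j = B (?\<pi> rs i) ((?\<pi> cs \<circ> inv (?\<pi> p)) j)"
  proof (intro allI impI)
    fix i j assume "i < n" "j < n"
    define j' where "j' = inv (?\<pi> p) j"
    have "j' < n"
      using permutes_in_image[OF permutes_inv[OF \<pi>(1)], of j] \<open>j < n\<close> by (simp add: j'_def)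
    moreover have "p ! j' = j"
      using permutes_inverses(1)[OF \<pi>(1), of j] \<open>j' < n\<close> by (simp add: j'_def)
    ultimately show "A i j = B (?\<pi> rs i) ((?\<pi> cs \<circ> inv (?\<pi> p)) j)"
      using eq \<open>i < n\<close> by (auto simp: j'_def[symmetric])
  qed
qed

lemma permuted_tao_if_orthogonal_completion:
  assumes "R 0 = tao_exps ! 0" and "R 1 = tao_exps ! 1"
    and "\<And>i. 2 \<le> i \<Longrightarrow> i < 6 \<Longrightarrow> R i \<in> set tao_completion_rows"
    and "\<And>i i'. 2 \<le> i \<Longrightarrow> i < i' \<Longrightarrow> i' < 6 \<Longrightarrow> orthogonal_exps (R i') (R i)"
  obtains rs cs where "(rs, cs) \<in> set tao_permutations" and "map R [0..<6] = permuted_tao rs cs"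
proof -
  have "set [R 2, R 3, R 4, R 5] \<subseteq> set tao_completion_rows"
    using assms(3) by simp
  moreover have "sorted_wrt (\<lambda>v w. orthogonal_exps w v) [R 2, R 3, R 4, R 5]"
    using assms(4) by simp
  moreover have "length [R 2, R 3, R 4, R 5] = 4"
    by simp
  ultimately have "[R 2, R 3, R 4, R 5] \<in> set (orthogonal_sequences 4 tao_completion_rows)"
    using in_orthogonal_sequences by metis
  moreover have "map R [0..<6] = [R 0, R 1, R 2, R 3, R 4, R 5]"
    by (simp add: upt_rec eval_nat_numeral)
  ultimately have "map R [0..<6] \<in> set (map (case_prod permuted_tao) tao_permutations)"
    using dephased_tao_completions_are_permuted_tao assms(1,2) by (simp add: list_all_iff)
  then show thesis
    using that by auto
qed

lemma dephased_exponents_permuted_tao: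
  fixes f :: "nat \<Rightarrow> nat \<Rightarrow> nat"
  assumes lt: "\<forall>i j. f i j < 3" and row0: "\<forall>j. f 0 j = 0" and col0: "\<forall>i. f i 0 = 0"
    and orth: "\<And>i i'. i < 6 \<Longrightarrow> i' < 6 \<Longrightarrow> i \<noteq> i' \<Longrightarrow>
      orthogonal_exps (map (f i) [0..<6]) (map (f i') [0..<6])"
  obtains \<sigma> \<tau> where "\<sigma> permutes {..<6}" and "\<tau> permutes {..<6}"
    and "\<forall>i<6. \<forall>j<6. f i j = tao_exps ! \<sigma> i ! \<tau> j"
proof -
  have f_lt: "f i j < 3" for i j
    using lt by simp
  have digits: "f i j \<in> {0, 1, 2}" for i j
    using f_lt[of i j] by auto
  define v where "v = map (f 1) [0..<6]"
  have "set v \<subseteq> {0, 1, 2}"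
    unfolding v_def set_map by (rule image_subsetI) (rule digits)
  moreover have "length v = 6" "v ! 0 = 0"
    using col0 by (simp_all add: v_def)
  moreover have "balanced v"
    using orth[of 1 0] row0 f_lt by (simp add: v_def orthogonal_exps_def map2_map_map)
  ultimately have p: "sorting_perm v \<in> permutations_of_set {..<6}" "sorting_perm v ! 0 = 0"
    "map ((!) v) (sorting_perm v) = tao_exps ! 1"
    using sorting_perm_to_tao_row by blast+
  define p where "p = sorting_perm v"
  have len_p: "length p = 6" and set_p: "set p = {..<6}" and "distinct p"
    using p(1) length_finite_permutations_of_set[OF p(1)] permutations_of_setD[OF p(1)]
    by (simp_all add: p_def)
  have "set p = set [0..<6]"
    using set_p by (simp add: atLeast0LessThan)
  then have mset_p: "mset p = mset [0..<6]"
    using set_eq_iff_mset_eq_distinct[OF \<open>distinct p\<close> distinct_upt] by blast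
  define R where "R i = map (f i) p" for i
  have R_orth: "orthogonal_exps (R i) (R i')" if "i < 6" "i' < 6" "i \<noteq> i'" for i i'
    using orth[OF that] orthogonal_exps_map_mset_eq[OF mset_p] by (simp add: R_def)
  have R0: "R 0 = tao_exps ! 0"
  proof -
    have "R 0 = replicate 6 0"
      using row0 len_p by (simp add: R_def list_eq_iff_nth_eq)
    then show ?thesis
      by (simp add: tao_exps_def numeral_eq_Suc)
  qed
  have R1: "R 1 = tao_exps ! 1"
  proof -
    have "R 1 = map ((!) v) p"
      using set_p by (auto simp: R_def v_def)
    then show ?thesis
      using p(3) by (simp add: p_def)
  qed
  have R_rows: "R i \<in> set tao_completion_rows" if "2 \<le> i" "i < 6" for i
  proof -
    have "p \<noteq> []"
      using len_p by auto
    then have "hd (R i) = f i (p ! 0)"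
      by (simp add: R_def hd_map hd_conv_nth)
    then have "hd (R i) = 0"
      using col0 p(2) by (simp add: p_def)
    moreover have "set (R i) \<subseteq> {0, 1, 2}"
      unfolding R_def set_map by (rule image_subsetI) (rule digits)
    then have "R i \<in> set (List.n_lists 6 [0, 1, 2])"
      using len_p by (simp add: R_def set_n_lists)
    ultimately show ?thesis
      using R_orth[of i 0] R_orth[of i 1] R0 R1 that by (simp add: tao_completion_rows_def)
  qed
  have "orthogonal_exps (R i') (R i)" if "2 \<le> i" "i < i'" "i' < 6" for i i'
    using R_orth that by simp
  then obtain rs cs where rs_cs: "(rs, cs) \<in> set tao_permutations"
    and R_eq: "map R [0..<6] = permuted_tao rs cs"
    using permuted_tao_if_orthogonal_completion[OF R0 R1 R_rows] by blast
  note rs_cs_perms = tao_permutations_in_permutations_of_set[OF rs_cs]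
  have "\<forall>i<6. \<forall>j<6. f i (p ! j) = tao_exps ! (rs ! i) ! (cs ! j)"
  proof (intro allI impI)
    fix i j :: nat assume "i < 6" "j < 6"
    have "length rs = 6" "length cs = 6"
      using rs_cs_perms by (simp_all add: length_finite_permutations_of_set)
    then show "f i (p ! j) = tao_exps ! (rs ! i) ! (cs ! j)"
      using arg_cong[OF R_eq, of "\<lambda>M. M ! i ! j"] \<open>i < 6\<close> \<open>j < 6\<close> len_p
      by (simp add: R_def permuted_tao_def)
  qed
  then show thesis
    using that by (rule permutes_if_permuted_matrix_eq[OF p(1)[folded p_def] rs_cs_perms])
qed

theorem mainTheorem1:
  fixes S :: "nat \<Rightarrow> nat \<Rightarrow> complex"
  assumes "is_CHM 6 S"
    and "\<forall>i<6. \<forall>j<6. S i j \<in> {1, omega3, omega3 ^ 2}"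
  shows "complex_equivalent 6 S tao6"
proof -
  obtain f c d where S: "\<forall>i<6. \<forall>j<6. S i j = c i * omega3 ^ f i j * d j"
    and c: "\<forall>i. cmod (c i) = 1" and d: "\<forall>j. cmod (d j) = 1"
    and f: "\<forall>i j. f i j < 3" "\<forall>j. f 0 j = 0" "\<forall>i. f i 0 = 0"
    by (rule omega3_matrix_dephased[OF assms(2)])
  have orth: "orthogonal_exps (map (f i) [0..<6]) (map (f i') [0..<6])"
    if "i < 6" "i' < 6" "i \<noteq> i'" for i i'
    using orthogonal_exps_rows_if_is_CHM[OF assms(1) S c d that] .
  obtain \<sigma> \<tau> where \<sigma>: "\<sigma> permutes {..<6}" and \<tau>: "\<tau> permutes {..<6}"
    and f_tao: "\<forall>i<6. \<forall>j<6. f i j = tao_exps ! \<sigma> i ! \<tau> j"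
    by (rule dephased_exponents_permuted_tao[OF f orth])
  have S_tao: "\<forall>i<6. \<forall>j<6. S i j = c i * tao6 (\<sigma> i) (\<tau> j) * d j"
    using S f_tao by (simp add: tao6_def)
  show ?thesis
    by (rule complex_equivalent_if_phased_permutation[OF \<sigma> \<tau> _ _ S_tao]) (simp_all add: c d)
qed

end
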